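(* Let $\mathbb F$ be a field and $\lambda\in\mathbb F$, $\lambda\ne0$. With $J$, $K_{XY}$ ($5n\times 5n$, for $X,Y\in\mathbb F^{n\times n}$) and $M_1,M_2$ (with $m=5n$) as defined in the context, for all $X,Y,X',Y'\in\mathbb F^{n\times n}$ the pairs $(X,Y)$ and $(X',Y')$ are similar if and only if $(M_1(\lambda I_{5n}+J),M_2(K_{XY}))$ and $(M_1(\lambda I_{5n}+J),M_2(K_{X'Y'}))$ are weakly similar. Moreover $M_1(\lambda I_{5n}+J)$ and $M_2(K_{XY})$ commute, and if additionally $\lambda\neq-1$ then $M_1(\lambda I_{5n}+J)+M_2(K_{XY})$ is nonsingular.
   Context: For $X,Y\in\mathbb F^{n\times n}$, $J$ and $K_{XY}$ are the $5n\times 5n$ block matrices (blocks $n\times n$) $J=\begin{bmatrix}0&I_n&0&0&0\\0&0&I_n&0&0\\0&0&0&I_n&0\\0&0&0&0&0\\0&0&0&0&0\end{bmatrix}$, $K_{XY}=\begin{bmatrix}0&0&X&0&Y\\0&0&0&X&0\\0&0&0&0&0\\0&0&0&0&0\\0&0&0&I_n&0\end{bmatrix}$. For $A,B\in\mathbb F^{m\times m}$: $M_1(A)=I_{2m+2}\oplus 0_{3m+3}\oplus I_{m+1}\oplus A$, $M_2(B)=0_{2m+2}\oplus I_{3m+3}\oplus \lambda I_{m+1}\oplus B$. Pairs $(M,N)$, $(M',N')$ are similar if $(S^{-1}MS,S^{-1}NS)=(M',N')$ for some nonsingular $S$; weakly similar if $(M',N')=(S^{-1}(\alpha M+\beta N)S,S^{-1}(\gamma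 M+\delta N)S)$ for some nonsingular $S$ and nonsingular $\begin{bmatrix}\alpha&\beta\\ \gamma&\delta\end{bmatrix}$. *)

theory Defs
  imports "Jordan_Normal_Form.Matrix"
begin

definition dsum :: "'a::zero mat \<Rightarrow> 'a mat \<Rightarrow> 'a mat" where
  "dsum A B = four_block_mat A (0\<^sub>m (dim_row A) (dim_col B)) (0\<^sub>m (dim_row B) (dim_col A)) B"

definition blocks5 :: "nat \<Rightarrow> (nat \<Rightarrow> nat \<Rightarrow> 'a mat) \<Rightarrow> 'a mat" where
  "blocks5 n blk = mat (5*n) (5*n) (\<lambda>(i,j). blk (i div n) (j div n) $$ (i mod n, j mod n))"

definition Jmat :: "nat \<Rightarrow> 'a::{zero,one} mat" where
  "Jmat n = blocks5 n (\<lambda>p q. if q = p + 1 \<and> p < 3 then 1\<^sub>m n else 0\<^sub>m n n)"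

definition Kmat :: "nat \<Rightarrow> 'a::{zero,one} mat \<Rightarrow> 'a mat \<Rightarrow> 'a mat" where
  "Kmat n X Y = blocks5 n (\<lambda>p q.
      if (p,q) = (0,2) then X
      else if (p,q) = (0,4) then Y
      else if (p,q) = (1,3) then X
      else if (p,q) = (4,3) then 1\<^sub>m n
      else 0\<^sub>m n n)"

definition M1 :: "'a::{zero,one} mat \<Rightarrow> 'a mat" where
  "M1 A = (let m = dim_row A in
     dsum (1\<^sub>m (2*m+2)) (dsum (0\<^sub>m (3*m+3) (3*m+3)) (dsum (1\<^sub>m (m+1)) A)))"

definition M2 :: "'a::semiring_1 \<Rightarrow> 'a mat \<Rightarrow> 'a mat" where
  "M2 lam B = (let m = dim_row B in
     dsum (0\<^sub>m (2*m+2) (2*m+2)) (dsum (1\<^sub>m (3*m+3)) (dsum (lam \<cdot>\<^sub>m 1\<^sub>m (m+1)) B)))"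

definition pair_similar :: "nat \<Rightarrow> 'a::comm_ring_1 mat \<times> 'a mat \<Rightarrow> 'a mat \<times> 'a mat \<Rightarrow> bool" where
  "pair_similar k P P' \<longleftrightarrow> (\<exists>S Sinv. S \<in> carrier_mat k k \<and> Sinv \<in> carrier_mat k k \<and>
      S * Sinv = 1\<^sub>m k \<and> Sinv * S = 1\<^sub>m k \<and>
      Sinv * fst P * S = fst P' \<and> Sinv * snd P * S = snd P')"

definition pair_weakly_similar :: "nat \<Rightarrow> 'a::comm_ring_1 mat \<times> 'a mat \<Rightarrow> 'a mat \<times> 'a mat \<Rightarrow> bool" where
  "pair_weakly_similar k P P' \<longleftrightarrow> (\<exists>S Sinv \<alpha> \<beta> \<gamma> \<delta>. S \<in> carrier_mat k k \<and> Sinv \<in> carrier_mat k k \<and>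
      S * Sinv = 1\<^sub>m k \<and> Sinv * S = 1\<^sub>m k \<and> \<alpha> * \<delta> - \<beta> * \<gamma> \<noteq> 0 \<and>
      Sinv * (\<alpha> \<cdot>\<^sub>m fst P + \<beta> \<cdot>\<^sub>m snd P) * S = fst P' \<and>
      Sinv * (\<gamma> \<cdot>\<^sub>m fst P + \<delta> \<cdot>\<^sub>m snd P) * S = snd P')"

end

theory Submission
  imports Defs "Jordan_Normal_Form.Matrix_Kernel" "Jordan_Normal_Form.Determinant"
begin

text \<open>
  Both \<open>M1 (\<lambda>I + J) = I \<oplus> 0 \<oplus> I \<oplus> (\<lambda>I + J)\<close> and \<open>M2 K = 0 \<oplus> I \<oplus> \<lambda>I \<oplus> K\<close> are block
  diagonal with equal block sizes, so commutation and invertibility reduce to the last block: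
  \<open>\<lambda>I + J\<close> and \<open>K\<close> commute, and \<open>\<alpha>(\<lambda>I + J) + \<beta>K + \<gamma>I\<close> is injective when \<open>\<alpha>\<lambda> + \<gamma> \<noteq> 0\<close>.
  A similarity \<open>S\<close> of \<open>(X, Y)\<close> yields the similarity \<open>I \<oplus> I \<oplus> I \<oplus> diag(S, \<dots>, S)\<close>.
  Conversely, the kernel dimensions of \<open>\<alpha>M1 + \<beta>M2 + \<gamma>I\<close> are invariant under weak similarity, and
  the identity blocks of sizes \<open>2m+2\<close>, \<open>3m+3\<close>, \<open>m+1\<close> make them detect the coefficients, so a weak
  similarity is a similarity \<open>T\<close>. Let \<open>A\<close> be the \<open>n \<times> n\<close> block of \<open>T\<close> at position \<open>(3, 3)\<close> of its
  last diagonal block. Commuting with \<open>M1\<close> and intertwining \<open>M2 K\<^sub>X\<^sub>Y\<close> with \<open>M2 K\<^sub>X\<^sub>'\<^sub>Y\<^sub>'\<close> gives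
  \<open>XA = AX'\<close>, \<open>YA = AY'\<close> and makes the rows of \<open>T\<close> through \<open>A\<close> vanish outside \<open>A\<close>; hence the
  corresponding block of \<open>T\<^sup>-\<^sup>1\<close> inverts \<open>A\<close>.
\<close>

lemma index_mult_sum:
  assumes "A \<in> carrier_mat k k" "B \<in> carrier_mat k k" "i < k" "j < k"
  shows "(A * B) $$ (i, j) = (\<Sum>l<k. A $$ (i, l) * B $$ (l, j))"
  using assms by (auto simp: scalar_prod_def lessThan_atLeast0 intro!: sum.cong)

lemma sum_lessThan_add:
  "(\<Sum>k < a + (b::nat). f k) = (\<Sum>k<a. f k) + (\<Sum>k<b. (f (a + k) :: 'a::comm_monoid_add))"
  by (induction b) (auto simp: add.assoc)

lemma sum_delta_mult_left [simp]:
  "r < (n::nat) \<Longrightarrow> (\<Sum>l<n. c * (if r = l then 1 else 0) * g l) = c * (g r :: 'a::semiring_1)"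
  by (simp add: if_distrib[of "\<lambda>x. c * x * _"] cong: if_cong)

lemma sum_delta_mult [simp]:
  "r < (n::nat) \<Longrightarrow> (\<Sum>l<n. (if r = l then 1 else 0) * g l) = (g r :: 'a::semiring_1)"
  by (simp add: if_distrib[of "\<lambda>x. x * _"] cong: if_cong)

lemma one_smult_mat [simp]: "1 \<cdot>\<^sub>m A = (A :: 'a::semiring_1 mat)"
  by (intro eq_matI) auto

lemma zero_smult_mat [simp]: "0 \<cdot>\<^sub>m A = (0\<^sub>m (dim_row A) (dim_col A) :: 'a::semiring_1 mat)"
  by (intro eq_matI) auto

lemma smult_smult_mat [simp]: "a \<cdot>\<^sub>m (b \<cdot>\<^sub>m A) = (a * b) \<cdot>\<^sub>m (A :: 'a::semigroup_mult mat)"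
  by (intro eq_matI) (auto simp: mult.assoc)

lemma smult_one_mat_mult [simp]:
  "dim_row A = n \<Longrightarrow> (c \<cdot>\<^sub>m 1\<^sub>m n) * A = c \<cdot>\<^sub>m (A :: 'a::comm_semiring_1 mat)"
  by (subst mult_smult_assoc_mat[of _ n n A "dim_col A"]) auto

lemma mult_smult_one_mat [simp]:
  "dim_col A = n \<Longrightarrow> A * (c \<cdot>\<^sub>m 1\<^sub>m n) = c \<cdot>\<^sub>m (A :: 'a::comm_semiring_1 mat)"
  by (subst mult_smult_distrib[of A "dim_row A" n]) auto

lemma zero_add_mat' [simp]:
  "dim_row A = k \<Longrightarrow> dim_col A = l \<Longrightarrow> 0\<^sub>m k l + A = (A :: 'a::monoid_add mat)"
  by (auto simp: mat_eq_iff)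

lemma add_zero_mat' [simp]:
  "dim_row A = k \<Longrightarrow> dim_col A = l \<Longrightarrow> A + 0\<^sub>m k l = (A :: 'a::monoid_add mat)"
  by (auto simp: mat_eq_iff)

lemma add_eq_add_swap_cancel_mat [simp]:
  assumes "dim_row B = dim_row A" "dim_col B = dim_col A" "dim_row C = dim_row A" "dim_col C = dim_col A"
  shows "A + B = C + A \<longleftrightarrow> B = (C :: 'a::cancel_ab_semigroup_add mat)"
  using assms by (auto simp: mat_eq_iff add.commute)

lemma add_eq_self_mat [simp]:
  assumes "dim_row B = dim_row A" "dim_col B = dim_col A"
  shows "A + B = A \<longleftrightarrow> B = (0\<^sub>m (dim_row A) (dim_col A) :: 'a::cancel_comm_monoid_add mat)"
  using assms by (auto simp: mat_eq_iff)

lemma self_eq_add_mat [simp]: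
  assumes "dim_row B = dim_row A" "dim_col B = dim_col A"
  shows "A = B + A \<longleftrightarrow> B = (0\<^sub>m (dim_row A) (dim_col A) :: 'a::cancel_comm_monoid_add mat)"
  using assms by (auto simp: mat_eq_iff)

lemma zero_mult_mat_vec [simp]: "v \<in> carrier_vec n \<Longrightarrow> 0\<^sub>m k n *\<^sub>v v = (0\<^sub>v k :: 'a::semiring_0 vec)"
  by (intro eq_vecI) (auto simp: scalar_prod_def)

lemma smult_mult_mat_vec [simp]:
  "dim_vec v = dim_col A \<Longrightarrow> (c \<cdot>\<^sub>m A) *\<^sub>v v = c \<cdot>\<^sub>v (A *\<^sub>v v :: 'a::comm_semiring_0 vec)"
  by (intro eq_vecI) (auto simp: scalar_prod_def sum_distrib_left ac_simps)

lemma mult_mat_vec_zero [simp]: "A \<in> carrier_mat k n \<Longrightarrow> A *\<^sub>v 0\<^sub>v n = (0\<^sub>v k :: 'a::semiring_0 vec)"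
  by (intro eq_vecI) (auto simp: scalar_prod_def)

lemma smult_zero_vec [simp]: "a \<cdot>\<^sub>v 0\<^sub>v n = (0\<^sub>v n :: 'a::mult_zero vec)"
  by (auto simp: vec_eq_iff)

lemma smult_vec_eq_zero_iff:
  "u \<in> carrier_vec n \<Longrightarrow> (d \<cdot>\<^sub>v u = 0\<^sub>v n) \<longleftrightarrow> d = 0 \<or> u = (0\<^sub>v n :: 'a::idom vec)"
  by (auto simp: vec_eq_iff)

lemma conj_eq_imp_intertwine:
  fixes M M' :: "'a::semiring_1 mat"
  assumes "M \<in> carrier_mat k k" "S \<in> carrier_mat k k" "S' \<in> carrier_mat k k"
    and "S * S' = 1\<^sub>m k" "S' * M * S = M'"
  shows "M * S = S * M'" "M' * S' = S' * M"
proof -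
  have "M * S = (S * S') * (M * S)" using assms by simp
  also have "\<dots> = S * (S' * (M * S))" by (rule assoc_mult_mat) (use assms in auto)
  also have "S' * (M * S) = S' * M * S" by (rule assoc_mult_mat[symmetric]) (use assms in auto)
  finally show "M * S = S * M'" using assms(5) by simp
  have "S' * M = (S' * M) * (S * S')" using assms by simp
  also have "\<dots> = (S' * M * S) * S'" by (rule assoc_mult_mat[symmetric]) (use assms in auto)
  finally show "M' * S' = S' * M" using assms(5) by simp
qed

lemma intertwine_imp_conj_eq:
  fixes M M' :: "'a::semiring_1 mat"
  assumes "M \<in> carrier_mat k k" "M' \<in> carrier_mat k k" "S \<in> carrier_mat k k" "S' \<in> carrier_mat k k"
    and "S' * S = 1\<^sub>m k" "M * S = S * M'"
  shows "S' * M * S = M'"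
proof -
  have "S' * M * S = S' * (M * S)" by (rule assoc_mult_mat) (use assms in auto)
  also have "\<dots> = (S' * S) * M'" unfolding assms(6) by (rule assoc_mult_mat[symmetric]) (use assms in auto)
  finally show ?thesis using assms by simp
qed

lemma invertible_mat_if_det_nonzero:
  assumes "A \<in> carrier_mat k k" "det A \<noteq> (0 :: 'a::field)"
  shows "invertible_mat A"
proof -
  from det_non_zero_imp_unit[OF assms, of "()"]
  obtain B where "B \<in> carrier_mat k k" "B * A = 1\<^sub>m k" "A * B = 1\<^sub>m k"
    unfolding Units_def by (auto simp: ring_mat_simps)
  then show ?thesis unfolding invertible_mat_def inverts_mat_def using assms(1) by auto
qed

lemma kernel_dim_le: "A \<in> carrier_mat k k \<Longrightarrow> kernel.dim k (A :: 'a::field mat) \<le> k"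
  using kernel_dim_code[of A] unfolding kernel_dim_def by simp

lemma kernel_dim_smult_one:
  "kernel.dim k (c \<cdot>\<^sub>m 1\<^sub>m k :: 'a::field mat) = (if c = 0 then k else 0)"
proof (cases "c = 0")
  case True
  interpret kernel k k "0\<^sub>m k k :: 'a mat" by unfold_locales auto
  have "mat_kernel (0\<^sub>m k k :: 'a mat) = carrier_vec k" unfolding mat_kernel_def by auto
  then have "NC.V\<lparr>carrier := mat_kernel (0\<^sub>m k k :: 'a mat)\<rparr> = NC.V" by simp
  moreover have "c \<cdot>\<^sub>m 1\<^sub>m k = (0\<^sub>m k k :: 'a mat)" using True by (intro eq_matI) auto
  ultimately show ?thesis using True NC.dim_is_n by simp
next
  case False
  have "mat_kernel (c \<cdot>\<^sub>m 1\<^sub>m k * 1\<^sub>m k) = mat_kernel (1\<^sub>m k :: 'a mat)"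
    by (rule mat_kernel_mult_eq[of _ k k _ "inverse c \<cdot>\<^sub>m 1\<^sub>m k"]) (use False in auto)
  then show ?thesis using False kernel_one_mat(1)[of k, where 'a = 'a] by simp
qed

lemma mat_kernel_trivial_imp_kernel_dim_0:
  assumes "mat_kernel A = {0\<^sub>v k}"
  shows "kernel.dim k (A :: 'a::field mat) = 0"
proof -
  have "mat_kernel (1\<^sub>m k :: 'a mat) = {0\<^sub>v k}" unfolding mat_kernel_def by auto
  then have "kernel.dim k A = kernel.dim k (1\<^sub>m k :: 'a mat)" using assms by simp
  then show ?thesis using kernel_one_mat(1)[of k, where 'a = 'a] by simp
qed

lemma kernel_dim_conj_add_smult_one:
  fixes M :: "'a::field mat"
  assumes M: "M \<in> carrier_mat k k" and S: "S \<in> carrier_mat k k" "S' \<in> carrier_mat k k"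
    and inv: "S * S' = 1\<^sub>m k" "S' * S = 1\<^sub>m k"
  shows "kernel.dim k (S' * M * S + c \<cdot>\<^sub>m 1\<^sub>m k) = kernel.dim k (M + c \<cdot>\<^sub>m 1\<^sub>m k)"
proof -
  have "S' * (M + c \<cdot>\<^sub>m 1\<^sub>m k) * S = S' * M * S + c \<cdot>\<^sub>m (S' * S)"
    using M S by (simp add: mult_add_distrib_mat add_mult_distrib_mat[of _ k k] mult_smult_assoc_mat[of _ k k])
  then have conj: "S' * (M + c \<cdot>\<^sub>m 1\<^sub>m k) * S = S' * M * S + c \<cdot>\<^sub>m 1\<^sub>m k"
    using inv by simp
  have "similar_mat_wit (S' * (M + c \<cdot>\<^sub>m 1\<^sub>m k) * S) (M + c \<cdot>\<^sub>m 1\<^sub>m k) S' S"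
    using M S inv unfolding similar_mat_wit_def by auto
  then show ?thesis using M S unfolding conj by (intro similar_mat_wit_kernel_dim) auto
qed

section \<open>Direct sums\<close>

lemma dim_dsum [simp]:
  "dim_row (dsum A B) = dim_row A + dim_row B" "dim_col (dsum A B) = dim_col A + dim_col B"
  unfolding dsum_def by auto

lemma dsum_carrier [simp]:
  "A \<in> carrier_mat a a \<Longrightarrow> B \<in> carrier_mat b b \<Longrightarrow> dsum A B \<in> carrier_mat (a + b) (a + b)"
  unfolding dsum_def by auto

lemma index_dsum:
  assumes "i < dim_row A + dim_row B" "j < dim_col A + dim_col B"
  shows "dsum A B $$ (i, j) =
    (if i < dim_row A then if j < dim_col A then A $$ (i, j) else 0
     else if j < dim_col A then 0 else B $$ (i - dim_row A, j - dim_col A))"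
  unfolding dsum_def using assms by (auto simp: index_mat_four_block)

lemma index_dsum_scalar_one:
  assumes "dim_col B = dim_row B" "i < k + dim_row B" "j < k + dim_row B"
  shows "dsum (c \<cdot>\<^sub>m 1\<^sub>m k) B $$ (i, j) =
    (if i < k \<or> j < k then if i = j then c else 0 else (B :: 'a::semiring_1 mat) $$ (i - k, j - k))"
  using assms by (auto simp: index_dsum)

lemma one_mat_dsum: "1\<^sub>m (a + b) = dsum (1\<^sub>m a) (1\<^sub>m b :: 'a::semiring_1 mat)"
  by (intro eq_matI) (auto simp: index_dsum)

lemma smult_dsum: "c \<cdot>\<^sub>m dsum A B = dsum (c \<cdot>\<^sub>m A) (c \<cdot>\<^sub>m B :: 'a::semiring_1 mat)"
  by (intro eq_matI) (auto simp: index_dsum)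

lemma add_dsum:
  assumes "A \<in> carrier_mat a a" "C \<in> carrier_mat a a" "B \<in> carrier_mat b b" "D \<in> carrier_mat b b"
  shows "dsum A B + dsum C D = dsum (A + C) (B + D :: 'a::semiring_1 mat)"
  by (intro eq_matI) (use assms in \<open>auto simp: index_dsum\<close>)

lemma mult_dsum:
  assumes "A \<in> carrier_mat a a" "C \<in> carrier_mat a a" "B \<in> carrier_mat b b" "D \<in> carrier_mat b b"
  shows "dsum A B * dsum C D = dsum (A * C) (B * D :: 'a::semiring_1 mat)"
  using assms unfolding dsum_def
  by (subst mult_four_block_mat[of A a a _ b _ b B C a _ b _ D]) auto

lemma kernel_dim_dsum:
  assumes "A \<in> carrier_mat a a" "B \<in> carrier_mat b b"
  shows "kernel.dim (a + b) (dsum A B) = kernel.dim a A + kernel.dim b (B :: 'a::field mat)"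
  by (rule kernel_four_block_0_mat[OF _ assms]) (use assms in \<open>auto simp: dsum_def\<close>)

lemma det_dsum:
  "A \<in> carrier_mat a a \<Longrightarrow> B \<in> carrier_mat b b \<Longrightarrow> det (dsum A B) = det A * det (B :: 'a::idom mat)"
  unfolding dsum_def by (rule det_four_block_mat_lower_left_zero) auto

section \<open>Matrices of the shape xI \<oplus> yI \<oplus> zI \<oplus> W\<close>

definition scalar_frame :: "nat \<Rightarrow> 'a::semiring_1 \<Rightarrow> 'a \<Rightarrow> 'a \<Rightarrow> 'a mat \<Rightarrow> 'a mat" where
  "scalar_frame m x y z W =
     dsum (x \<cdot>\<^sub>m 1\<^sub>m (2*m+2)) (dsum (y \<cdot>\<^sub>m 1\<^sub>m (3*m+3)) (dsum (z \<cdot>\<^sub>m 1\<^sub>m (m+1)) W))"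

lemma frame_size: "7*m+6 = (2*m+2) + ((3*m+3) + ((m+1) + (m::nat)))"
  by simp

lemma dim_scalar_frame [simp]:
  "dim_row (scalar_frame m x y z W) = 6*m+6 + dim_row W" "dim_col (scalar_frame m x y z W) = 6*m+6 + dim_col W"
  unfolding scalar_frame_def by simp_all

lemma scalar_frame_carrier_iff [simp]:
  "W \<in> carrier_mat m m \<Longrightarrow> scalar_frame m x y z W \<in> carrier_mat k k \<longleftrightarrow> k = 7*m+6"
proof -
  assume "W \<in> carrier_mat m m"
  then have "dim_row (scalar_frame m x y z W) = 7*m+6" "dim_col (scalar_frame m x y z W) = 7*m+6"
    by simp_all
  then show ?thesis unfolding carrier_mat_def mem_Collect_eq by auto
qed

lemma index_scalar_frame:
  assumes "W \<in> carrier_mat m m" "i < 7*m+6" "j < 7*m+6"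
  shows "scalar_frame m x y z W $$ (i, j) =
    (if i < 6*m+6 \<or> j < 6*m+6
     then if i = j then (if i < 2*m+2 then x else if i < 5*m+5 then y else z) else 0
     else W $$ (i - (6*m+6), j - (6*m+6)))"
  using assms unfolding scalar_frame_def
  by (auto simp: index_dsum_scalar_one eq_diff_iff diff_diff_left add.commute)

lemma M1_scalar_frame: "A \<in> carrier_mat m m \<Longrightarrow> M1 A = scalar_frame m 1 0 1 A"
  unfolding M1_def scalar_frame_def Let_def by simp

lemma M2_scalar_frame: "B \<in> carrier_mat m m \<Longrightarrow> M2 lam B = scalar_frame m 0 1 lam B"
  unfolding M2_def scalar_frame_def Let_def by simp

lemma one_mat_scalar_frame: "1\<^sub>m (7*m+6) = scalar_frame m 1 1 1 (1\<^sub>m m :: 'a::semiring_1 mat)"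
  unfolding scalar_frame_def by (simp only: frame_size one_mat_dsum one_smult_mat)

lemma smult_scalar_frame:
  "a \<cdot>\<^sub>m scalar_frame m x y z W = scalar_frame m (a * x) (a * y) (a * z) (a \<cdot>\<^sub>m W)"
  unfolding scalar_frame_def by (simp add: smult_dsum)

lemma add_scalar_frame:
  assumes "W \<in> carrier_mat m m" "W' \<in> carrier_mat m m"
  shows "scalar_frame m x y z W + scalar_frame m x' y' z' W' =
    scalar_frame m (x + x') (y + y') (z + z') (W + W')"
proof -
  note I = smult_carrier_mat[OF one_carrier_mat]
  show ?thesis unfolding scalar_frame_def
    by (simp add: add_dsum[OF I I dsum_carrier[OF I dsum_carrier[OF I assms(1)]]
          dsum_carrier[OF I dsum_carrier[OF I assms(2)]]]
        add_dsum[OF I I dsum_carrier[OF I assms(1)] dsum_carrier[OF I assms(2)]]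
        add_dsum[OF I I assms] add_smult_distrib_right_mat[OF one_carrier_mat])
qed

lemma mult_scalar_frame:
  assumes "W \<in> carrier_mat m m" "W' \<in> carrier_mat m m"
  shows "scalar_frame m x y z W * scalar_frame m x' y' z' W' =
    scalar_frame m (x * x') (y * y') (z * z') (W * W' :: 'a::comm_semiring_1 mat)"
proof -
  note I = smult_carrier_mat[OF one_carrier_mat]
  show ?thesis unfolding scalar_frame_def
    by (simp add: mult_dsum[OF I I dsum_carrier[OF I dsum_carrier[OF I assms(1)]]
          dsum_carrier[OF I dsum_carrier[OF I assms(2)]]]
        mult_dsum[OF I I dsum_carrier[OF I assms(1)] dsum_carrier[OF I assms(2)]]
        mult_dsum[OF I I assms] mult.commute)
qed

lemma lincomb_scalar_frame:
  assumes "W \<in> carrier_mat m m" "W' \<in> carrier_mat m m"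
  shows "a \<cdot>\<^sub>m scalar_frame m x y z W + b \<cdot>\<^sub>m scalar_frame m x' y' z' W' + c \<cdot>\<^sub>m 1\<^sub>m (7*m+6) =
    scalar_frame m (a*x + b*x' + c) (a*y + b*y' + c) (a*z + b*z' + c)
      (a \<cdot>\<^sub>m W + b \<cdot>\<^sub>m W' + c \<cdot>\<^sub>m (1\<^sub>m m :: 'a::comm_semiring_1 mat))"
  using assms unfolding one_mat_scalar_frame smult_scalar_frame by (simp add: add_scalar_frame)

lemma kernel_dim_scalar_frame:
  assumes "W \<in> carrier_mat m m"
  shows "kernel.dim (7*m+6) (scalar_frame m x y z (W :: 'a::field mat)) =
    (if x = 0 then 2*m+2 else 0) + (if y = 0 then 3*m+3 else 0) + (if z = 0 then m+1 else 0)
    + kernel.dim m W"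
proof -
  note I = smult_carrier_mat[OF one_carrier_mat]
  show ?thesis unfolding scalar_frame_def frame_size
    by (simp only: kernel_dim_dsum[OF I dsum_carrier[OF I dsum_carrier[OF I assms]]]
        kernel_dim_dsum[OF I dsum_carrier[OF I assms]] kernel_dim_dsum[OF I assms]
        kernel_dim_smult_one)
qed

lemma det_scalar_frame:
  assumes "W \<in> carrier_mat m m"
  shows "det (scalar_frame m x y z (W :: 'a::idom mat)) = x^(2*m+2) * y^(3*m+3) * z^(m+1) * det W"
proof -
  note I = smult_carrier_mat[OF one_carrier_mat]
  show ?thesis unfolding scalar_frame_def
    by (simp add: det_dsum[OF I dsum_carrier[OF I dsum_carrier[OF I assms]]]
        det_dsum[OF I dsum_carrier[OF I assms]] det_dsum[OF I assms])
qed

lemma corner_size: "7*m+6 = (6*m+6) + (m::nat)"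
  by simp

lemma scalar_frame_mult_corner_row:
  assumes "W \<in> carrier_mat m m" "T \<in> carrier_mat (7*m+6) (7*m+6)" "i < m" "j < 7*m+6"
  shows "(scalar_frame m x y z W * T) $$ (6*m+6 + i, j) = (\<Sum>k<m. W $$ (i, k) * T $$ (6*m+6 + k, j))"
proof -
  have "(scalar_frame m x y z W * T) $$ (6*m+6 + i, j) =
      (\<Sum>k < 7*m+6. scalar_frame m x y z W $$ (6*m+6 + i, k) * T $$ (k, j))"
    using assms by (intro index_mult_sum) auto
  also have "\<dots> = (\<Sum>k < (6*m+6) + m. scalar_frame m x y z W $$ (6*m+6 + i, k) * T $$ (k, j))"
    by (simp only: corner_size)
  also have "\<dots> = (\<Sum>k < 6*m+6. scalar_frame m x y z W $$ (6*m+6 + i, k) * T $$ (k, j))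
      + (\<Sum>k<m. scalar_frame m x y z W $$ (6*m+6 + i, 6*m+6 + k) * T $$ (6*m+6 + k, j))"
    by (rule sum_lessThan_add)
  also have "(\<Sum>k < 6*m+6. scalar_frame m x y z W $$ (6*m+6 + i, k) * T $$ (k, j)) = 0"
    using assms by (intro sum.neutral) (auto simp: index_scalar_frame)
  finally show ?thesis using assms by (simp add: index_scalar_frame)
qed

lemma mult_scalar_frame_corner_col:
  assumes "W \<in> carrier_mat m m" "T \<in> carrier_mat (7*m+6) (7*m+6)" "i < 7*m+6" "j < m"
  shows "(T * scalar_frame m x y z W) $$ (i, 6*m+6 + j) = (\<Sum>k<m. T $$ (i, 6*m+6 + k) * W $$ (k, j))"
proof -
  have "(T * scalar_frame m x y z W) $$ (i, 6*m+6 + j) =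
      (\<Sum>k < 7*m+6. T $$ (i, k) * scalar_frame m x y z W $$ (k, 6*m+6 + j))"
    using assms by (intro index_mult_sum) auto
  also have "\<dots> = (\<Sum>k < (6*m+6) + m. T $$ (i, k) * scalar_frame m x y z W $$ (k, 6*m+6 + j))"
    by (simp only: corner_size)
  also have "\<dots> = (\<Sum>k < 6*m+6. T $$ (i, k) * scalar_frame m x y z W $$ (k, 6*m+6 + j))
      + (\<Sum>k<m. T $$ (i, 6*m+6 + k) * scalar_frame m x y z W $$ (6*m+6 + k, 6*m+6 + j))"
    by (rule sum_lessThan_add)
  also have "(\<Sum>k < 6*m+6. T $$ (i, k) * scalar_frame m x y z W $$ (k, 6*m+6 + j)) = 0"
    using assms by (intro sum.neutral) (auto simp: index_scalar_frame)
  finally show ?thesis using assms by (simp add: index_scalar_frame)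
qed

lemma mult_scalar_frame_outer_col:
  assumes "W \<in> carrier_mat m m" "T \<in> carrier_mat (7*m+6) (7*m+6)" "i < 7*m+6" "j < 6*m+6"
  shows "(T * scalar_frame m x y z W) $$ (i, j) =
    T $$ (i, j) * (if j < 2*m+2 then x else if j < 5*m+5 then y else z)"
proof -
  have "(T * scalar_frame m x y z W) $$ (i, j) = (\<Sum>k < 7*m+6. T $$ (i, k) * scalar_frame m x y z W $$ (k, j))"
    using assms by (intro index_mult_sum) auto
  also have "\<dots> = (\<Sum>k < 7*m+6. if k = j then T $$ (i, j) * (if j < 2*m+2 then x else if j < 5*m+5 then y else z) else 0)"
    using assms by (intro sum.cong) (auto simp: index_scalar_frame)
  finally show ?thesis using assms by simp
qed

section \<open>Matrices of 5 \<times> 5 blocks\<close>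

lemma block_index_less: "p < k \<Longrightarrow> r < n \<Longrightarrow> p * n + r < k * (n::nat)"
proof -
  assume "p < k" "r < n"
  then have "p * n + r < Suc p * n" by simp
  also have "\<dots> \<le> k * n" using \<open>p < k\<close> by (intro mult_le_mono1) simp
  finally show ?thesis .
qed

lemma block_index_eq_iff:
  assumes "r < n" "c < (n::nat)"
  shows "p * n + r = q * n + c \<longleftrightarrow> p = q \<and> r = c"
proof
  assume e: "p * n + r = q * n + c"
  have "p = (p * n + r) div n" "r = (p * n + r) mod n" "q = (q * n + c) div n" "c = (q * n + c) mod n"
    using assms by simp_all
  then show "p = q \<and> r = c" using e by metis
qed simp

lemma block_index_cases:
  assumes "i < k * (n::nat)"
  obtains p r where "p < k" "r < n" "i = p * n + r"
proof
  have "0 < n" using assms by (cases n) auto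
  then show "i div n < k" "i mod n < n" "i = i div n * n + i mod n"
    using assms by (auto simp: less_mult_imp_div_less)
qed

lemma less_5_cases: "(p::nat) < 5 \<Longrightarrow> (p = 0 \<Longrightarrow> P) \<Longrightarrow> (p = 1 \<Longrightarrow> P) \<Longrightarrow> (p = 2 \<Longrightarrow> P)
  \<Longrightarrow> (p = 3 \<Longrightarrow> P) \<Longrightarrow> (p = 4 \<Longrightarrow> P) \<Longrightarrow> P"
  by linarith

lemma sum_lessThan_mult: "(\<Sum>k < q * (n::nat). f k) = (\<Sum>p<q. \<Sum>c<n. (f (p * n + c) :: 'a::comm_monoid_add))"
proof (induction q)
  case (Suc q)
  have "(\<Sum>k < Suc q * n. f k) = (\<Sum>k < q * n + n. f k)" by (simp add: add.commute)
  then show ?case using Suc by (simp add: sum_lessThan_add)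
qed simp

lemma sum_lessThan_5: "(\<Sum>p < (5::nat). f p) = f 0 + f 1 + f 2 + f 3 + (f 4 :: 'a::comm_monoid_add)"
  by (simp add: numeral_eq_Suc)

lemma blocks5_carrier [simp]: "blocks5 n f \<in> carrier_mat (5*n) (5*n)"
  unfolding blocks5_def by simp

lemma dim_blocks5 [simp]: "dim_row (blocks5 n f) = 5*n" "dim_col (blocks5 n f) = 5*n"
  unfolding blocks5_def by simp_all

lemma index_blocks5:
  "p < 5 \<Longrightarrow> q < 5 \<Longrightarrow> r < n \<Longrightarrow> c < n \<Longrightarrow> blocks5 n f $$ (p*n + r, q*n + c) = f p q $$ (r, c)"
  unfolding blocks5_def using block_index_less[of p 5 r n] block_index_less[of q 5 c n] by simp

lemma eq_blocks5I:
  assumes "A \<in> carrier_mat (5*n) (5*n)" "B \<in> carrier_mat (5*n) (5*n)"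
    and "\<And>p q r c. p < 5 \<Longrightarrow> q < 5 \<Longrightarrow> r < n \<Longrightarrow> c < n \<Longrightarrow> A $$ (p*n + r, q*n + c) = B $$ (p*n + r, q*n + c)"
  shows "A = B"
proof (rule eq_matI)
  fix i j assume "i < dim_row B" "j < dim_col B"
  with assms(2) obtain p r q c where "p < 5" "r < n" "i = p*n + r" "q < 5" "c < n" "j = q*n + c"
    by (auto elim!: block_index_cases)
  with assms(3) show "A $$ (i, j) = B $$ (i, j)" by simp
qed (use assms in auto)

lemma blocks5_cong:
  "(\<And>p q. p < 5 \<Longrightarrow> q < 5 \<Longrightarrow> f p q = g p q) \<Longrightarrow> blocks5 n f = blocks5 n g"
  unfolding blocks5_def
  by (intro cong_mat refl) (auto simp: less_mult_imp_div_less)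

lemma mult_blocks5:
  fixes f g :: "nat \<Rightarrow> nat \<Rightarrow> 'a::semiring_1 mat"
  assumes "\<And>p q. p < 5 \<Longrightarrow> q < 5 \<Longrightarrow> f p q \<in> carrier_mat n n"
    and "\<And>p q. p < 5 \<Longrightarrow> q < 5 \<Longrightarrow> g p q \<in> carrier_mat n n"
  shows "blocks5 n f * blocks5 n g =
    blocks5 n (\<lambda>p q. f p 0 * g 0 q + f p 1 * g 1 q + f p 2 * g 2 q + f p 3 * g 3 q + f p 4 * g 4 q)"
proof (rule eq_blocks5I)
  fix p q r c :: nat assume pq: "p < 5" "q < 5" "r < n" "c < n"
  have "(blocks5 n f * blocks5 n g) $$ (p*n + r, q*n + c) =
      (\<Sum>k < 5*n. blocks5 n f $$ (p*n + r, k) * blocks5 n g $$ (k, q*n + c))"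
    using pq by (intro index_mult_sum) (auto intro: block_index_less)
  also have "\<dots> = (\<Sum>k<5. \<Sum>l<n. f p k $$ (r, l) * g k q $$ (l, c))"
    using pq by (simp add: sum_lessThan_mult index_blocks5)
  also have "\<dots> = (\<Sum>k<5. (f p k * g k q) $$ (r, c))"
    using pq assms by (intro sum.cong refl) (simp add: index_mult_sum[of _ n])
  also have "\<dots> = blocks5 n (\<lambda>p q. f p 0 * g 0 q + f p 1 * g 1 q + f p 2 * g 2 q + f p 3 * g 3 q + f p 4 * g 4 q)
      $$ (p*n + r, q*n + c)"
  proof -
    have "dim_row (f p k * g k q) = n" "dim_col (f p k * g k q) = n" if "k < 5" for k
      using assms(1)[of p k] assms(2)[of k q] that pq by auto
    then show ?thesis using pq by (simp add: index_blocks5 sum_lessThan_5)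
  qed
  finally show "(blocks5 n f * blocks5 n g) $$ (p*n + r, q*n + c) = \<dots>" .
qed auto

definition diag_blocks5 :: "nat \<Rightarrow> 'a::zero mat \<Rightarrow> 'a mat" where
  "diag_blocks5 n S = blocks5 n (\<lambda>p q. if p = q then S else 0\<^sub>m n n)"

lemma diag_blocks5_carrier [simp]: "diag_blocks5 n S \<in> carrier_mat (5*n) (5*n)"
  unfolding diag_blocks5_def by simp

lemma diag_blocks5_one: "diag_blocks5 n (1\<^sub>m n) = (1\<^sub>m (5*n) :: 'a::semiring_1 mat)"
  unfolding diag_blocks5_def
  by (rule eq_blocks5I) (auto simp: index_blocks5 block_index_less block_index_eq_iff)

lemma diag_blocks5_mult_blocks5:
  fixes f :: "nat \<Rightarrow> nat \<Rightarrow> 'a::semiring_1 mat"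
  assumes "S \<in> carrier_mat n n" "\<And>p q. p < 5 \<Longrightarrow> q < 5 \<Longrightarrow> f p q \<in> carrier_mat n n"
  shows "diag_blocks5 n S * blocks5 n f = blocks5 n (\<lambda>p q. S * f p q)"
  unfolding diag_blocks5_def
  apply (simp add: mult_blocks5 assms)
  apply (rule blocks5_cong)
  subgoal premises pq for p q
  proof -
    have "0\<^sub>m n n * f k q = 0\<^sub>m n n" "S * f k q \<in> carrier_mat n n" if "k < 5" for k
      using assms(1) assms(2)[OF that pq(2)] by auto
    with pq(1) show ?thesis by (elim less_5_cases) simp_all
  qed
  done

lemma blocks5_mult_diag_blocks5:
  fixes f :: "nat \<Rightarrow> nat \<Rightarrow> 'a::semiring_1 mat"
  assumes "S \<in> carrier_mat n n" "\<And>p q. p < 5 \<Longrightarrow> q < 5 \<Longrightarrow> f p q \<in> carrier_mat n n"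
  shows "blocks5 n f * diag_blocks5 n S = blocks5 n (\<lambda>p q. f p q * S)"
  unfolding diag_blocks5_def
  apply (simp add: mult_blocks5 assms)
  apply (rule blocks5_cong)
  subgoal premises pq for p q
  proof -
    have "f p k * 0\<^sub>m n n = 0\<^sub>m n n" "f p k * S \<in> carrier_mat n n" if "k < 5" for k
      using assms(1) assms(2)[OF pq(1) that] by auto
    with pq(2) show ?thesis by (elim less_5_cases) simp_all
  qed
  done

lemma diag_blocks5_mult:
  assumes "S \<in> carrier_mat n n" "T \<in> carrier_mat n n"
  shows "diag_blocks5 n S * diag_blocks5 n T = diag_blocks5 n (S * T :: 'a::semiring_1 mat)"
proof -
  have "diag_blocks5 n S * diag_blocks5 n T = blocks5 n (\<lambda>p q. S * (if p = q then T else 0\<^sub>m n n))"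
    unfolding diag_blocks5_def[of n T] using assms by (simp add: diag_blocks5_mult_blocks5)
  also have "\<dots> = diag_blocks5 n (S * T)"
    unfolding diag_blocks5_def using assms by (intro blocks5_cong) simp
  finally show ?thesis .
qed

lemma diag_blocks5_conj:
  fixes f :: "nat \<Rightarrow> nat \<Rightarrow> 'a::semiring_1 mat"
  assumes "S \<in> carrier_mat n n" "S' \<in> carrier_mat n n"
    and "\<And>p q. p < 5 \<Longrightarrow> q < 5 \<Longrightarrow> f p q \<in> carrier_mat n n"
  shows "diag_blocks5 n S' * blocks5 n f * diag_blocks5 n S = blocks5 n (\<lambda>p q. S' * f p q * S)"
proof -
  have "diag_blocks5 n S' * blocks5 n f = blocks5 n (\<lambda>p q. S' * f p q)"
    using assms by (simp add: diag_blocks5_mult_blocks5)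
  then show ?thesis using assms by (simp add: blocks5_mult_diag_blocks5)
qed

definition vblock :: "nat \<Rightarrow> 'a vec \<Rightarrow> nat \<Rightarrow> 'a vec" where
  "vblock n v p = vec n (\<lambda>r. v $ (p*n + r))"

lemma vblock_carrier [simp]: "vblock n v p \<in> carrier_vec n"
  unfolding vblock_def by simp

lemma dim_vblock [simp]: "dim_vec (vblock n v p) = n"
  unfolding vblock_def by simp

lemma vblock_zero [simp]: "vblock n (0\<^sub>v (5*n)) p = 0\<^sub>v n" if "p < 5"
  using that block_index_less[of p 5 _ n] unfolding vblock_def by (intro eq_vecI) auto

lemma vblock_mult_blocks5:
  fixes f :: "nat \<Rightarrow> nat \<Rightarrow> 'a::semiring_1 mat"
  assumes "\<And>p q. p < 5 \<Longrightarrow> q < 5 \<Longrightarrow> f p q \<in> carrier_mat n n" "v \<in> carrier_vec (5*n)" "p < 5"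
  shows "vblock n (blocks5 n f *\<^sub>v v) p =
    f p 0 *\<^sub>v vblock n v 0 + f p 1 *\<^sub>v vblock n v 1 + f p 2 *\<^sub>v vblock n v 2
    + f p 3 *\<^sub>v vblock n v 3 + f p 4 *\<^sub>v vblock n v 4"
proof (rule eq_vecI)
  fix r assume "r < dim_vec (f p 0 *\<^sub>v vblock n v 0 + f p 1 *\<^sub>v vblock n v 1 + f p 2 *\<^sub>v vblock n v 2
    + f p 3 *\<^sub>v vblock n v 3 + f p 4 *\<^sub>v vblock n v 4)"
  then have r: "r < n" using assms(1)[of p 4] assms(3) by simp
  have dims: "dim_row (f p k) = n" "dim_col (f p k) = n" if "k < 5" for k
    using assms(1)[OF assms(3) that] by auto
  have "vblock n (blocks5 n f *\<^sub>v v) p $ r = (\<Sum>k < 5*n. blocks5 n f $$ (p*n + r, k) * v $ k)"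
    using assms r block_index_less[of p 5 r n]
    by (simp add: vblock_def scalar_prod_def lessThan_atLeast0)
  also have "\<dots> = (\<Sum>k<5. \<Sum>c<n. f p k $$ (r, c) * vblock n v k $ c)"
    using assms r by (simp add: sum_lessThan_mult index_blocks5 vblock_def)
  also have "\<dots> = (\<Sum>k<5. (f p k *\<^sub>v vblock n v k) $ r)"
    using r dims by (intro sum.cong refl) (auto simp: scalar_prod_def lessThan_atLeast0 intro!: sum.cong)
  finally show "vblock n (blocks5 n f *\<^sub>v v) p $ r = (f p 0 *\<^sub>v vblock n v 0 + f p 1 *\<^sub>v vblock n v 1
    + f p 2 *\<^sub>v vblock n v 2 + f p 3 *\<^sub>v vblock n v 3 + f p 4 *\<^sub>v vblock n v 4) $ r"
    using r dims by (simp add: sum_lessThan_5)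
qed (use assms(1)[OF assms(3), of 4] in \<open>simp add: vblock_def\<close>)

lemma vblocks_zero_imp_zero:
  assumes "v \<in> carrier_vec (5*n)" "\<And>p. p < 5 \<Longrightarrow> vblock n v p = 0\<^sub>v n"
  shows "v = 0\<^sub>v (5*n)"
proof (rule eq_vecI)
  fix i assume "i < dim_vec (0\<^sub>v (5*n) :: 'a vec)"
  then obtain p r where "p < 5" "r < n" "i = p*n + r" by (auto elim!: block_index_cases)
  then show "v $ i = 0\<^sub>v (5*n) $ i"
    using assms(2)[of p] block_index_less[of p 5 r n] unfolding vblock_def
    by (metis index_vec index_zero_vec(1))
qed (use assms in auto)

section \<open>The matrices \<lambda>I + J and K\<close>

lemma Jmat_carrier [simp]: "Jmat n \<in> carrier_mat (5*n) (5*n)"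
  unfolding Jmat_def by simp

lemma dim_Jmat [simp]: "dim_row (Jmat n) = 5*n" "dim_col (Jmat n) = 5*n"
  unfolding Jmat_def by simp_all

lemma Kmat_carrier [simp]: "Kmat n X Y \<in> carrier_mat (5*n) (5*n)"
  unfolding Kmat_def by simp

lemma dim_Kmat [simp]: "dim_row (Kmat n X Y) = 5*n" "dim_col (Kmat n X Y) = 5*n"
  unfolding Kmat_def by simp_all

abbreviation Lmat :: "nat \<Rightarrow> 'a::comm_ring_1 \<Rightarrow> 'a mat" where
  "Lmat n lam \<equiv> lam \<cdot>\<^sub>m 1\<^sub>m (5*n) + Jmat n"

lemma Lmat_carrier [simp]: "Lmat n lam \<in> carrier_mat (5*n) (5*n)"
  by simp

lemma Lmat_eq_blocks5:
  "Lmat n lam = blocks5 n (\<lambda>p q. if p = q then lam \<cdot>\<^sub>m 1\<^sub>m n else if q = p + 1 \<and> p < 3 then 1\<^sub>m n else 0\<^sub>m n n)"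
  by (rule eq_blocks5I)
    (auto simp: Jmat_def index_blocks5 block_index_less block_index_eq_iff)

lemma Lmat_Kmat_commute:
  assumes "X \<in> carrier_mat n n" "Y \<in> carrier_mat n n"
  shows "Lmat n lam * Kmat n X Y = Kmat n X Y * Lmat n lam"
  unfolding Lmat_eq_blocks5 Kmat_def using assms
  by (simp add: mult_blocks5) (rule blocks5_cong, auto elim!: less_5_cases)

lemma diag_blocks5_conj_Lmat:
  fixes lam :: "'a::comm_ring_1"
  assumes "S \<in> carrier_mat n n" "S' \<in> carrier_mat n n" "S' * S = 1\<^sub>m n"
  shows "diag_blocks5 n S' * Lmat n lam * diag_blocks5 n S = Lmat n lam"
  unfolding Lmat_eq_blocks5 using assms
  by (subst diag_blocks5_conj) (auto intro!: blocks5_cong simp: mult_smult_assoc_mat[of S' n n S n])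

lemma diag_blocks5_conj_Kmat:
  fixes X Y :: "'a::comm_ring_1 mat"
  assumes "S \<in> carrier_mat n n" "S' \<in> carrier_mat n n" "S' * S = 1\<^sub>m n"
    and "X \<in> carrier_mat n n" "Y \<in> carrier_mat n n"
  shows "diag_blocks5 n S' * Kmat n X Y * diag_blocks5 n S = Kmat n (S' * X * S) (S' * Y * S)"
  unfolding Kmat_def using assms
  by (subst diag_blocks5_conj) (auto intro!: blocks5_cong)

lemma lincomb_Lmat_Kmat_eq_blocks5:
  fixes lam :: "'a::comm_ring_1"
  assumes "X \<in> carrier_mat n n" "Y \<in> carrier_mat n n"
  shows "a \<cdot>\<^sub>m Lmat n lam + b \<cdot>\<^sub>m Kmat n X Y + c \<cdot>\<^sub>m 1\<^sub>m (5*n) = blocks5 n (\<lambda>p q.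
     if p = q then (a * lam + c) \<cdot>\<^sub>m 1\<^sub>m n
     else if q = p + 1 \<and> p < 3 then a \<cdot>\<^sub>m 1\<^sub>m n
     else if (p, q) = (0, 2) \<or> (p, q) = (1, 3) then b \<cdot>\<^sub>m X
     else if (p, q) = (0, 4) then b \<cdot>\<^sub>m Y
     else if (p, q) = (4, 3) then b \<cdot>\<^sub>m 1\<^sub>m n
     else 0\<^sub>m n n)" (is "?L = ?R")
proof (rule eq_blocks5I)
  fix p q r c' :: nat assume pq: "p < 5" "q < 5" "r < n" "c' < n"
  then have "p*n + r < 5*n" "q*n + c' < 5*n" by (auto intro: block_index_less)
  with pq assms show "?L $$ (p*n + r, q*n + c') = ?R $$ (p*n + r, q*n + c')"
    by (simp add: Jmat_def Kmat_def index_blocks5 block_index_eq_iff) (auto simp: algebra_simps)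
qed auto

lemma mat_kernel_lincomb_Lmat_Kmat:
  fixes lam a b c :: "'a::field"
  assumes X: "X \<in> carrier_mat n n" and Y: "Y \<in> carrier_mat n n" and d: "a * lam + c \<noteq> 0"
  shows "mat_kernel (a \<cdot>\<^sub>m Lmat n lam + b \<cdot>\<^sub>m Kmat n X Y + c \<cdot>\<^sub>m 1\<^sub>m (5*n)) = {0\<^sub>v (5*n)}"
proof -
  let ?W = "a \<cdot>\<^sub>m Lmat n lam + b \<cdot>\<^sub>m Kmat n X Y + c \<cdot>\<^sub>m 1\<^sub>m (5*n)"
  have "v = 0\<^sub>v (5*n)" if v: "v \<in> carrier_vec (5*n)" and Wv: "?W *\<^sub>v v = 0\<^sub>v (5*n)" for v
  proof -
    define u where "u = vblock n v"
    have u: "u k \<in> carrier_vec n" for k unfolding u_def by simp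
    have eq: "vblock n (?W *\<^sub>v v) p = 0\<^sub>v n" if "p < 5" for p using Wv that by simp
    note block_eq = lincomb_Lmat_Kmat_eq_blocks5[OF X Y] vblock_mult_blocks5[OF _ v] u_def[symmetric]
      smult_vec_eq_zero_iff
    \<comment> \<open>back substitution in the block order 3, 2, 4, 1, 0\<close>
    have u3: "u 3 = 0\<^sub>v n" using eq[of 3] X Y u d by (simp add: block_eq)
    have u2: "u 2 = 0\<^sub>v n" using eq[of 2] X Y u d u3 by (simp add: block_eq)
    have u4: "u 4 = 0\<^sub>v n" using eq[of 4] X Y u d u3 by (simp add: block_eq)
    have u1: "u 1 = 0\<^sub>v n" using eq[of 1] X Y u d u2 u3 by (simp add: block_eq)
    have u0: "u 0 = 0\<^sub>v n" using eq[of 0] X Y u d u1 u2 u4 by (simp add: block_eq)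
    show ?thesis
      using u0 u1 u2 u3 u4 unfolding u_def by (intro vblocks_zero_imp_zero[OF v]) (auto elim!: less_5_cases)
  qed
  then show ?thesis unfolding mat_kernel_def by auto
qed

lemma M1_Lmat_eq: "M1 (Lmat n lam) = scalar_frame (5*n) 1 0 1
  (blocks5 n (\<lambda>p q. if p = q then lam \<cdot>\<^sub>m 1\<^sub>m n else if q = p + 1 \<and> p < 3 then 1\<^sub>m n else 0\<^sub>m n n))"
  by (simp add: M1_scalar_frame Lmat_eq_blocks5)

lemma M2_Kmat_eq:
  "M2 lam (Kmat n X Y) = scalar_frame (5*n) 0 1 lam (blocks5 n (\<lambda>p q.
      if (p,q) = (0,2) then X
      else if (p,q) = (0,4) then Y
      else if (p,q) = (1,3) then X
      else if (p,q) = (4,3) then 1\<^sub>m n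
      else 0\<^sub>m n n))"
  by (simp add: M2_scalar_frame Kmat_def)

section \<open>Corner blocks of an intertwiner\<close>

text \<open>The \<open>n \<times> n\<close> block \<open>(p, q)\<close> of the last diagonal block (of size \<open>5n\<close>, starting at \<open>6m+6\<close>
  with \<open>m = 5n\<close>) of a matrix of size \<open>7m+6\<close>.\<close>

definition corner_block :: "nat \<Rightarrow> 'a mat \<Rightarrow> nat \<Rightarrow> nat \<Rightarrow> 'a mat" where
  "corner_block n T p q = mat n n (\<lambda>(r, c). T $$ (6*(5*n)+6 + (p*n + r), 6*(5*n)+6 + (q*n + c)))"

lemma corner_block_carrier [simp]: "corner_block n T p q \<in> carrier_mat n n"
  unfolding corner_block_def by simp

lemma dim_corner_block [simp]: "dim_row (corner_block n T p q) = n" "dim_col (corner_block n T p q) = n"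
  unfolding corner_block_def by simp_all

lemma corner_block_one_mat: "p < 5 \<Longrightarrow> corner_block n (1\<^sub>m (7*(5*n)+6)) p p = (1\<^sub>m n :: 'a::semiring_1 mat)"
  using block_index_less[of p 5 _ n] by (intro eq_matI) (auto simp: corner_block_def)

lemma scalar_frame_blocks5_mult_corner_row:
  fixes f :: "nat \<Rightarrow> nat \<Rightarrow> 'a::comm_semiring_1 mat"
  assumes T: "T \<in> carrier_mat (7*(5*n)+6) (7*(5*n)+6)" and "p < 5" "r < n" "j < 7*(5*n)+6"
  shows "(scalar_frame (5*n) x y z (blocks5 n f) * T) $$ (6*(5*n)+6 + (p*n + r), j) =
    (\<Sum>k<5. \<Sum>l<n. f p k $$ (r, l) * T $$ (6*(5*n)+6 + (k*n + l), j))"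
proof -
  have "(scalar_frame (5*n) x y z (blocks5 n f) * T) $$ (6*(5*n)+6 + (p*n + r), j) =
      (\<Sum>k < 5*n. blocks5 n f $$ (p*n + r, k) * T $$ (6*(5*n)+6 + k, j))"
    using assms block_index_less[of p 5 r n] by (intro scalar_frame_mult_corner_row) auto
  then show ?thesis using assms by (simp add: sum_lessThan_mult index_blocks5)
qed

lemma mult_scalar_frame_blocks5_corner_col:
  fixes f :: "nat \<Rightarrow> nat \<Rightarrow> 'a::comm_semiring_1 mat"
  assumes T: "T \<in> carrier_mat (7*(5*n)+6) (7*(5*n)+6)" and "q < 5" "c < n" "i < 7*(5*n)+6"
  shows "(T * scalar_frame (5*n) x y z (blocks5 n f)) $$ (i, 6*(5*n)+6 + (q*n + c)) =
    (\<Sum>k<5. \<Sum>l<n. T $$ (i, 6*(5*n)+6 + (k*n + l)) * f k q $$ (l, c))"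
proof -
  have "(T * scalar_frame (5*n) x y z (blocks5 n f)) $$ (i, 6*(5*n)+6 + (q*n + c)) =
      (\<Sum>k < 5*n. T $$ (i, 6*(5*n)+6 + k) * blocks5 n f $$ (k, q*n + c))"
    using assms block_index_less[of q 5 c n] by (intro mult_scalar_frame_corner_col) auto
  then show ?thesis using assms by (simp add: sum_lessThan_mult index_blocks5)
qed

lemma corner_block_scalar_frame_mult:
  fixes f :: "nat \<Rightarrow> nat \<Rightarrow> 'a::comm_semiring_1 mat"
  assumes f: "\<And>p q. p < 5 \<Longrightarrow> q < 5 \<Longrightarrow> f p q \<in> carrier_mat n n"
    and T: "T \<in> carrier_mat (7*(5*n)+6) (7*(5*n)+6)" and pq: "p < 5" "q < 5"
  shows "corner_block n (scalar_frame (5*n) x y z (blocks5 n f) * T) p q =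
    f p 0 * corner_block n T 0 q + f p 1 * corner_block n T 1 q + f p 2 * corner_block n T 2 q
    + f p 3 * corner_block n T 3 q + f p 4 * corner_block n T 4 q"
proof (rule eq_matI)
  fix r c assume rc: "r < dim_row (f p 0 * corner_block n T 0 q + f p 1 * corner_block n T 1 q
    + f p 2 * corner_block n T 2 q + f p 3 * corner_block n T 3 q + f p 4 * corner_block n T 4 q)"
    "c < dim_col (f p 0 * corner_block n T 0 q + f p 1 * corner_block n T 1 q
    + f p 2 * corner_block n T 2 q + f p 3 * corner_block n T 3 q + f p 4 * corner_block n T 4 q)"
  have dims: "dim_row (f p k) = n" "dim_col (f p k) = n" if "k < 5" for k
    using f[OF pq(1) that] by auto
  from rc have r: "r < n" and c: "c < n" using dims[of 4] by simp_all
  have "corner_block n (scalar_frame (5*n) x y z (blocks5 n f) * T) p q $$ (r, c) =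
      (scalar_frame (5*n) x y z (blocks5 n f) * T) $$ (6*(5*n)+6 + (p*n + r), 6*(5*n)+6 + (q*n + c))"
    using r c by (simp add: corner_block_def)
  also have "\<dots> = (\<Sum>k<5. \<Sum>l<n. f p k $$ (r, l) * T $$ (6*(5*n)+6 + (k*n + l), 6*(5*n)+6 + (q*n + c)))"
    by (rule scalar_frame_blocks5_mult_corner_row) (use T pq r block_index_less[OF pq(2) c] in auto)
  also have "\<dots> = (\<Sum>k<5. \<Sum>l<n. f p k $$ (r, l) * corner_block n T k q $$ (l, c))"
    using r c by (simp add: corner_block_def)
  also have "\<dots> = (\<Sum>k<5. (f p k * corner_block n T k q) $$ (r, c))"
    using r c f[OF pq(1)] by (intro sum.cong refl index_mult_sum[symmetric]) auto
  finally show "corner_block n (scalar_frame (5*n) x y z (blocks5 n f) * T) p q $$ (r, c) =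
    (f p 0 * corner_block n T 0 q + f p 1 * corner_block n T 1 q + f p 2 * corner_block n T 2 q
    + f p 3 * corner_block n T 3 q + f p 4 * corner_block n T 4 q) $$ (r, c)"
    using r c dims by (simp add: sum_lessThan_5)
qed (use f[OF pq(1), of 4] in auto)

lemma corner_block_mult_scalar_frame:
  fixes f :: "nat \<Rightarrow> nat \<Rightarrow> 'a::comm_semiring_1 mat"
  assumes f: "\<And>p q. p < 5 \<Longrightarrow> q < 5 \<Longrightarrow> f p q \<in> carrier_mat n n"
    and T: "T \<in> carrier_mat (7*(5*n)+6) (7*(5*n)+6)" and pq: "p < 5" "q < 5"
  shows "corner_block n (T * scalar_frame (5*n) x y z (blocks5 n f)) p q =
    corner_block n T p 0 * f 0 q + corner_block n T p 1 * f 1 q + corner_block n T p 2 * f 2 q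
    + corner_block n T p 3 * f 3 q + corner_block n T p 4 * f 4 q"
proof (rule eq_matI)
  fix r c assume rc: "r < dim_row (corner_block n T p 0 * f 0 q + corner_block n T p 1 * f 1 q
    + corner_block n T p 2 * f 2 q + corner_block n T p 3 * f 3 q + corner_block n T p 4 * f 4 q)"
    "c < dim_col (corner_block n T p 0 * f 0 q + corner_block n T p 1 * f 1 q
    + corner_block n T p 2 * f 2 q + corner_block n T p 3 * f 3 q + corner_block n T p 4 * f 4 q)"
  have dims: "dim_row (f k q) = n" "dim_col (f k q) = n" if "k < 5" for k
    using f[OF that pq(2)] by auto
  from rc have r: "r < n" and c: "c < n" using dims[of 4] by simp_all
  have "corner_block n (T * scalar_frame (5*n) x y z (blocks5 n f)) p q $$ (r, c) =
      (T * scalar_frame (5*n) x y z (blocks5 n f)) $$ (6*(5*n)+6 + (p*n + r), 6*(5*n)+6 + (q*n + c))"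
    using r c by (simp add: corner_block_def)
  also have "\<dots> = (\<Sum>k<5. \<Sum>l<n. T $$ (6*(5*n)+6 + (p*n + r), 6*(5*n)+6 + (k*n + l)) * f k q $$ (l, c))"
    by (rule mult_scalar_frame_blocks5_corner_col) (use T pq c block_index_less[OF pq(1) r] in auto)
  also have "\<dots> = (\<Sum>k<5. \<Sum>l<n. corner_block n T p k $$ (r, l) * f k q $$ (l, c))"
    using r c by (simp add: corner_block_def)
  also have "\<dots> = (\<Sum>k<5. (corner_block n T p k * f k q) $$ (r, c))"
    using r c f[OF _ pq(2)] by (intro sum.cong refl index_mult_sum[symmetric]) auto
  finally show "corner_block n (T * scalar_frame (5*n) x y z (blocks5 n f)) p q $$ (r, c) =
    (corner_block n T p 0 * f 0 q + corner_block n T p 1 * f 1 q + corner_block n T p 2 * f 2 q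
    + corner_block n T p 3 * f 3 q + corner_block n T p 4 * f 4 q) $$ (r, c)"
    using r c dims by (simp add: sum_lessThan_5)
qed (use f[OF _ pq(2), of 4] in auto)

lemma corner_block_mult_diag:
  fixes S S' :: "'a::comm_semiring_1 mat"
  assumes S: "S \<in> carrier_mat (7*(5*n)+6) (7*(5*n)+6)" and S': "S' \<in> carrier_mat (7*(5*n)+6) (7*(5*n)+6)"
    and p: "p < 5"
    and supp: "\<And>r j. r < n \<Longrightarrow> j < 7*(5*n)+6 \<Longrightarrow> j < 6*(5*n)+6 + p*n \<or> 6*(5*n)+6 + p*n + n \<le> j \<Longrightarrow>
      S $$ (6*(5*n)+6 + (p*n + r), j) = 0"
  shows "corner_block n (S * S') p p = corner_block n S p p * corner_block n S' p p"
proof (rule eq_matI)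
  fix r c assume "r < dim_row (corner_block n S p p * corner_block n S' p p)"
    "c < dim_col (corner_block n S p p * corner_block n S' p p)"
  then have r: "r < n" and c: "c < n" by simp_all
  define a where "a = 6*(5*n)+6 + p*n"
  define b where "b = 7*(5*n)+6 - (a + n)"
  have N: "7*(5*n)+6 = a + (n + b)"
    using block_index_less[of p 5 "n - 1" n] p r unfolding a_def b_def by simp
  have supp_r: "S $$ (a + r, j) = 0" if "j < a \<or> a + n \<le> j" "j < 7*(5*n)+6" for j
    using supp[OF r that(2)] that(1) unfolding a_def by (simp add: add.assoc)
  let ?g = "\<lambda>k. S $$ (a + r, k) * S' $$ (k, a + c)"
  have "corner_block n (S * S') p p $$ (r, c) = (S * S') $$ (a + r, a + c)"
    using r c by (simp add: corner_block_def a_def add.assoc)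
  also have "\<dots> = (\<Sum>k < 7*(5*n)+6. ?g k)"
    by (rule index_mult_sum[OF S S']) (use N r c in auto)
  also have "\<dots> = (\<Sum>k<a. ?g k) + (\<Sum>k<n. ?g (a + k)) + (\<Sum>k<b. ?g (a + (n + k)))"
    unfolding N sum_lessThan_add by (simp add: add.assoc)
  also have "(\<Sum>k<a. ?g k) = 0" using supp_r N by (intro sum.neutral) auto
  also have "(\<Sum>k<b. ?g (a + (n + k))) = 0" using supp_r N by (intro sum.neutral) auto
  also have "(\<Sum>k<n. ?g (a + k)) = (\<Sum>k<n. corner_block n S p p $$ (r, k) * corner_block n S' p p $$ (k, c))"
    using r c unfolding a_def by (intro sum.cong) (auto simp: corner_block_def add.assoc)
  also have "\<dots> = (corner_block n S p p * corner_block n S' p p) $$ (r, c)"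
    by (rule index_mult_sum[symmetric]) (use r c in auto)
  finally show "corner_block n (S * S') p p $$ (r, c) = (corner_block n S p p * corner_block n S' p p) $$ (r, c)"
    by simp
qed auto

lemma corner_blocks_commuting_M1_Lmat:
  fixes lam :: "'a::comm_ring_1"
  assumes T: "T \<in> carrier_mat (7*(5*n)+6) (7*(5*n)+6)"
    and H: "M1 (Lmat n lam) * T = T * M1 (Lmat n lam)"
  shows "corner_block n T 1 1 = corner_block n T 0 0" "corner_block n T 2 2 = corner_block n T 1 1"
    "corner_block n T 3 3 = corner_block n T 2 2"
    "corner_block n T 1 4 = 0\<^sub>m n n" "corner_block n T 2 4 = 0\<^sub>m n n" "corner_block n T 4 1 = 0\<^sub>m n n"
    "corner_block n T 3 0 = 0\<^sub>m n n" "corner_block n T 3 1 = 0\<^sub>m n n" "corner_block n T 3 2 = 0\<^sub>m n n"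
proof -
  have "corner_block n (M1 (Lmat n lam) * T) p q = corner_block n (T * M1 (Lmat n lam)) p q" for p q
    using H by simp
  note E = this[unfolded M1_Lmat_eq]
  note corner = corner_block_scalar_frame_mult[OF _ T] corner_block_mult_scalar_frame[OF _ T]
  show "corner_block n T 1 1 = corner_block n T 0 0" using E[of 0 1] by (simp add: corner)
  show "corner_block n T 2 2 = corner_block n T 1 1" using E[of 1 2] by (simp add: corner)
  show "corner_block n T 3 3 = corner_block n T 2 2" using E[of 2 3] by (simp add: corner)
  show "corner_block n T 1 4 = 0\<^sub>m n n" using E[of 0 4] by (simp add: corner)
  show "corner_block n T 2 4 = 0\<^sub>m n n" using E[of 1 4] by (simp add: corner)
  show "corner_block n T 4 1 = 0\<^sub>m n n" using E[of 4 2] by (simp add: corner)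
  show "corner_block n T 3 0 = 0\<^sub>m n n" using E[of 3 1] by (simp add: corner)
  show "corner_block n T 3 1 = 0\<^sub>m n n" using E[of 3 2] by (simp add: corner)
  show "corner_block n T 3 2 = 0\<^sub>m n n" using E[of 3 3] by (simp add: corner)
qed

lemma corner_blocks_intertwining_M2_Kmat:
  fixes X Y X' Y' :: "'a::comm_ring_1 mat"
  assumes T: "T \<in> carrier_mat (7*(5*n)+6) (7*(5*n)+6)"
    and XY: "X \<in> carrier_mat n n" "Y \<in> carrier_mat n n" "X' \<in> carrier_mat n n" "Y' \<in> carrier_mat n n"
    and H: "M2 lam (Kmat n X Y) * T = T * M2 lam (Kmat n X' Y')"
  shows "corner_block n T 3 1 * X' + corner_block n T 3 4 = 0\<^sub>m n n"
    "corner_block n T 3 3 = corner_block n T 4 1 * X' + corner_block n T 4 4"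
    "X * corner_block n T 3 3 = corner_block n T 1 1 * X' + corner_block n T 1 4"
    "X * corner_block n T 2 4 + Y * corner_block n T 4 4 = corner_block n T 0 0 * Y'"
proof -
  have "corner_block n (M2 lam (Kmat n X Y) * T) p q = corner_block n (T * M2 lam (Kmat n X' Y')) p q" for p q
    using H by simp
  note E = this[unfolded M2_Kmat_eq]
  note corner = corner_block_scalar_frame_mult[OF _ T] corner_block_mult_scalar_frame[OF _ T]
  show "corner_block n T 3 1 * X' + corner_block n T 3 4 = 0\<^sub>m n n"
    using E[of 3 3] XY by (simp add: corner)
  show "corner_block n T 3 3 = corner_block n T 4 1 * X' + corner_block n T 4 4"
    using E[of 4 3] XY by (simp add: corner)
  show "X * corner_block n T 3 3 = corner_block n T 1 1 * X' + corner_block n T 1 4"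
    using E[of 1 3] XY by (simp add: corner)
  show "X * corner_block n T 2 4 + Y * corner_block n T 4 4 = corner_block n T 0 0 * Y'"
    using E[of 0 4] XY by (simp add: corner)
qed

lemma intertwiner_corner_row_3_outside:
  fixes lam :: "'a::field"
  assumes lam: "lam \<noteq> 0" and T: "T \<in> carrier_mat (7*(5*n)+6) (7*(5*n)+6)"
    and H1: "M1 (Lmat n lam) * T = T * M1 (Lmat n lam)"
    and H2: "M2 lam (Kmat n X Y) * T = T * M2 lam (Kmat n X' Y')"
    and r: "r < n" and j: "j < 6*(5*n)+6"
  shows "T $$ (6*(5*n)+6 + (3*n + r), j) = 0"
proof -
  let ?o = "6*(5*n)+6" and ?m = "5*n"
  let ?t3 = "T $$ (?o + (3*n + r), j)" and ?t4 = "T $$ (?o + (4*n + r), j)"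
  have i3: "?o + (3*n + r) < 7*?m+6" and i4: "?o + (4*n + r) < 7*?m+6" and jN: "j < 7*?m+6"
    using block_index_less[of 3 5 r n] block_index_less[of 4 5 r n] r j by simp_all
  have "(M1 (Lmat n lam) * T) $$ (?o + (3*n + r), j) = lam * ?t3"
    unfolding M1_Lmat_eq
    by (subst scalar_frame_blocks5_mult_corner_row[OF T _ r jN]) (simp_all add: sum_lessThan_5 r)
  moreover have "(T * M1 (Lmat n lam)) $$ (?o + (3*n + r), j) =
      ?t3 * (if j < 2*?m+2 then 1 else if j < 5*?m+5 then 0 else 1)"
    unfolding M1_Lmat_eq by (rule mult_scalar_frame_outer_col[OF _ T i3 j]) simp
  ultimately have row3_M1: "lam * ?t3 = ?t3 * (if j < 2*?m+2 then 1 else if j < 5*?m+5 then 0 else 1)"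
    using H1 by simp
  have "(M2 lam (Kmat n X Y) * T) $$ (?o + (3*n + r), j) = 0"
    unfolding M2_Kmat_eq
    by (subst scalar_frame_blocks5_mult_corner_row[OF T _ r jN]) (simp_all add: sum_lessThan_5 r)
  moreover have "(T * M2 lam (Kmat n X' Y')) $$ (?o + (3*n + r), j) =
      ?t3 * (if j < 2*?m+2 then 0 else if j < 5*?m+5 then 1 else lam)"
    unfolding M2_Kmat_eq by (rule mult_scalar_frame_outer_col[OF _ T i3 j]) simp
  ultimately have row3_M2: "0 = ?t3 * (if j < 2*?m+2 then 0 else if j < 5*?m+5 then 1 else lam)"
    using H2 by simp
  have "(M2 lam (Kmat n X Y) * T) $$ (?o + (4*n + r), j) = ?t3"
    unfolding M2_Kmat_eq
    by (subst scalar_frame_blocks5_mult_corner_row[OF T _ r jN]) (simp_all add: sum_lessThan_5 r)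
  moreover have "(T * M2 lam (Kmat n X' Y')) $$ (?o + (4*n + r), j) =
      ?t4 * (if j < 2*?m+2 then 0 else if j < 5*?m+5 then 1 else lam)"
    unfolding M2_Kmat_eq by (rule mult_scalar_frame_outer_col[OF _ T i4 j]) simp
  ultimately have row4_M2: "?t3 = ?t4 * (if j < 2*?m+2 then 0 else if j < 5*?m+5 then 1 else lam)"
    using H2 by simp
  \<comment> \<open>each of the three scalar zones of the frames is settled by one of these equations\<close>
  show ?thesis
    using row3_M1 row3_M2 row4_M2 lam by (auto split: if_splits)
qed

lemma intertwiner_corner_row_3_support:
  fixes lam :: "'a::field"
  assumes lam: "lam \<noteq> 0" and T: "T \<in> carrier_mat (7*(5*n)+6) (7*(5*n)+6)"
    and XY: "X \<in> carrier_mat n n" "Y \<in> carrier_mat n n" "X' \<in> carrier_mat n n" "Y' \<in> carrier_mat n n"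
    and H1: "M1 (Lmat n lam) * T = T * M1 (Lmat n lam)"
    and H2: "M2 lam (Kmat n X Y) * T = T * M2 lam (Kmat n X' Y')"
    and r: "r < n" and j: "j < 7*(5*n)+6" "j < 6*(5*n)+6 + 3*n \<or> 6*(5*n)+6 + 3*n + n \<le> j"
  shows "T $$ (6*(5*n)+6 + (3*n + r), j) = 0"
proof (cases "j < 6*(5*n)+6")
  case True
  then show ?thesis by (rule intertwiner_corner_row_3_outside[OF lam T H1 H2 r])
next
  case False
  have "j - (6*(5*n)+6) < 5*n" using j(1) False by simp
  then obtain q c where "q < 5" "c < n" "j - (6*(5*n)+6) = q*n + c" by (rule block_index_cases)
  with False have qc: "q < 5" "c < n" "j = 6*(5*n)+6 + (q*n + c)" by simp_all
  with j(2) have "q \<noteq> 3" by auto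
  note M1 = corner_blocks_commuting_M1_Lmat[OF T H1]
  have "corner_block n T 3 4 = 0\<^sub>m n n"
    using corner_blocks_intertwining_M2_Kmat(1)[OF T XY H2] M1(8) XY by simp
  with M1(7-9) \<open>q < 5\<close> \<open>q \<noteq> 3\<close> have "corner_block n T 3 q = 0\<^sub>m n n" by (elim less_5_cases) auto
  then have "corner_block n T 3 q $$ (r, c) = 0" using r qc by simp
  then show ?thesis using r qc by (simp add: corner_block_def)
qed

lemma intertwiner_corner_block_33:
  fixes lam :: "'a::field"
  assumes T: "T \<in> carrier_mat (7*(5*n)+6) (7*(5*n)+6)"
    and XY: "X \<in> carrier_mat n n" "Y \<in> carrier_mat n n" "X' \<in> carrier_mat n n" "Y' \<in> carrier_mat n n"
    and H1: "M1 (Lmat n lam) * T = T * M1 (Lmat n lam)"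
    and H2: "M2 lam (Kmat n X Y) * T = T * M2 lam (Kmat n X' Y')"
  shows "X * corner_block n T 3 3 = corner_block n T 3 3 * X'"
    "Y * corner_block n T 3 3 = corner_block n T 3 3 * Y'"
proof -
  note M1 = corner_blocks_commuting_M1_Lmat[OF T H1]
  note M2 = corner_blocks_intertwining_M2_Kmat[OF T XY H2]
  show "X * corner_block n T 3 3 = corner_block n T 3 3 * X'"
    using M2(3) M1(1-4) XY by simp
  have "corner_block n T 4 4 = corner_block n T 3 3" using M2(2) M1(6) XY by simp
  then show "Y * corner_block n T 3 3 = corner_block n T 3 3 * Y'"
    using M2(4) M1(1-3,5) XY by simp
qed

lemma pair_similar_imp_pair_weakly_similar:
  fixes lam :: "'a::comm_ring_1"
  assumes XY: "X \<in> carrier_mat n n" "Y \<in> carrier_mat n n"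
    and sim: "pair_similar n (X, Y) (X', Y')"
  shows "pair_weakly_similar (7*(5*n)+6)
    (M1 (Lmat n lam), M2 lam (Kmat n X Y)) (M1 (Lmat n lam), M2 lam (Kmat n X' Y'))"
proof -
  from sim obtain S S' where S: "S \<in> carrier_mat n n" "S' \<in> carrier_mat n n"
    and inv: "S * S' = 1\<^sub>m n" "S' * S = 1\<^sub>m n" and conj: "S' * X * S = X'" "S' * Y * S = Y'"
    unfolding pair_similar_def by auto
  let ?S = "scalar_frame (5*n) 1 1 1 (diag_blocks5 n S)"
  let ?S' = "scalar_frame (5*n) 1 1 1 (diag_blocks5 n S')"
  have SC: "?S \<in> carrier_mat (7*(5*n)+6) (7*(5*n)+6)" "?S' \<in> carrier_mat (7*(5*n)+6) (7*(5*n)+6)"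
    by simp_all
  have inv': "?S * ?S' = 1\<^sub>m (7*(5*n)+6)" "?S' * ?S = 1\<^sub>m (7*(5*n)+6)"
    using S inv one_mat_scalar_frame[of "5*n", symmetric]
    by (simp_all add: mult_scalar_frame diag_blocks5_mult diag_blocks5_one)
  have conj_frame: "?S' * scalar_frame (5*n) x y z W * ?S =
      scalar_frame (5*n) x y z (diag_blocks5 n S' * W * diag_blocks5 n S)"
    if "W \<in> carrier_mat (5*n) (5*n)" for x y z W
    using that by (simp add: mult_scalar_frame mult_scalar_frame[OF mult_carrier_mat[OF diag_blocks5_carrier that]])
  have P: "?S' * M1 (Lmat n lam) * ?S = M1 (Lmat n lam)"
    using S inv by (simp add: M1_scalar_frame[of _ "5*n"] conj_frame diag_blocks5_conj_Lmat)
  have Q: "?S' * M2 lam (Kmat n X Y) * ?S = M2 lam (Kmat n X' Y')"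
    using S inv XY conj by (simp add: M2_scalar_frame[of _ "5*n"] conj_frame diag_blocks5_conj_Kmat)
  show ?thesis unfolding pair_weakly_similar_def
    by (rule exI[of _ ?S], rule exI[of _ ?S'], rule exI[of _ 1], rule exI[of _ 0], rule exI[of _ 0],
      rule exI[of _ 1]) (use P Q inv' SC in \<open>simp add: M1_scalar_frame[of _ "5*n"] M2_scalar_frame[of _ "5*n"]\<close>)
qed

definition nullity_pattern :: "'a::field \<Rightarrow> nat \<Rightarrow> ('a \<Rightarrow> 'a \<Rightarrow> 'a \<Rightarrow> nat) \<Rightarrow> 'a \<Rightarrow> 'a \<Rightarrow> 'a \<Rightarrow> nat" where
  "nullity_pattern lam m w a b c =
    (if a + c = 0 then 2*m+2 else 0) + (if b + c = 0 then 3*m+3 else 0)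
    + (if a + b * lam + c = 0 then m+1 else 0) + w a b c"

lemma kernel_dim_lincomb_M1_M2:
  fixes lam :: "'a::field"
  shows "kernel.dim (7*(5*n)+6) (a \<cdot>\<^sub>m M1 (Lmat n lam) + b \<cdot>\<^sub>m M2 lam (Kmat n X Y) + c \<cdot>\<^sub>m 1\<^sub>m (7*(5*n)+6)) =
    nullity_pattern lam (5*n)
      (\<lambda>a b c. kernel.dim (5*n) (a \<cdot>\<^sub>m Lmat n lam + b \<cdot>\<^sub>m Kmat n X Y + c \<cdot>\<^sub>m 1\<^sub>m (5*n))) a b c"
  unfolding M1_scalar_frame[OF Lmat_carrier] M2_scalar_frame[OF Kmat_carrier]
    lincomb_scalar_frame[OF Lmat_carrier Kmat_carrier]
  by (subst kernel_dim_scalar_frame) (simp_all add: nullity_pattern_def)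

lemma nullity_pattern_rigid:
  fixes lam \<alpha> \<beta> \<gamma> \<delta> :: "'a::field"
  assumes lam: "lam \<noteq> 0"
    and w: "\<And>a b c. w a b c \<le> m" "\<And>a b c. a * lam + c \<noteq> 0 \<Longrightarrow> w a b c = 0"
    and w': "\<And>a b c. w' a b c \<le> m"
    and E1: "\<And>c. nullity_pattern lam m w \<alpha> \<beta> c = nullity_pattern lam m w 1 0 c"
    and E2: "\<And>c. nullity_pattern lam m w \<gamma> \<delta> c = nullity_pattern lam m w' 0 1 c"
  shows "\<alpha> = 1 \<and> \<beta> = 0 \<and> \<gamma> = 0 \<and> \<delta> = 1"
proof -
  note N = nullity_pattern_def
  have \<beta>: "\<beta> = 0"
  proof (rule ccontr)
    assume "\<beta> \<noteq> 0"
    then have "nullity_pattern lam m w \<alpha> \<beta> 0 \<le> 3*m+2"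
      using lam w(1)[of \<alpha> \<beta> 0] w(2)[where a = \<alpha> and b = \<beta> and c = 0] unfolding N by (cases "\<alpha> = 0") auto
    moreover have "nullity_pattern lam m w 1 0 0 = 3*m+3" using lam w(2)[where a = 1 and b = 0 and c = 0] unfolding N by simp
    ultimately show False using E1[of 0] by simp
  qed
  have \<gamma>: "\<gamma> = 0"
  proof (rule ccontr)
    assume "\<gamma> \<noteq> 0"
    then have "nullity_pattern lam m w \<gamma> \<delta> 0 = 3*m+3 \<or> nullity_pattern lam m w \<gamma> \<delta> 0 \<le> m+1"
      using lam w(2)[where a = \<gamma> and b = \<delta> and c = 0] unfolding N by (cases "\<delta> = 0") auto
    moreover have "2*m+2 \<le> nullity_pattern lam m w' 0 1 0" "nullity_pattern lam m w' 0 1 0 \<le> 3*m+2"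
      using lam w'[of 0 1 0] unfolding N by simp_all
    ultimately show False using E2[of 0] by auto
  qed
  have \<alpha>: "\<alpha> = 1"
  proof (rule ccontr)
    assume "\<alpha> \<noteq> 1"
    then have "nullity_pattern lam m w \<alpha> 0 (-1) \<le> m" using w(1)[of \<alpha> 0 "-1"] unfolding N by simp
    moreover have "3*m+3 \<le> nullity_pattern lam m w 1 0 (-1)" unfolding N by simp
    ultimately show False using E1[of "-1"] \<beta> by simp
  qed
  have \<delta>: "\<delta> = 1"
  proof (rule ccontr)
    assume "\<delta> \<noteq> 1"
    then have "nullity_pattern lam m w 0 \<delta> (-1) \<le> m+1" using w(2)[where a = 0 and b = \<delta> and c = "-1"] unfolding N by simp
    moreover have "3*m+3 \<le> nullity_pattern lam m w' 0 1 (-1)" unfolding N by simp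
    ultimately show False using E2[of "-1"] \<gamma> by simp
  qed
  show ?thesis using \<alpha> \<beta> \<gamma> \<delta> by simp
qed

lemma weak_similarity_M1_M2_coefficients:
  fixes lam \<alpha> \<beta> \<gamma> \<delta> :: "'a::field"
  assumes lam: "lam \<noteq> 0" and XY: "X \<in> carrier_mat n n" "Y \<in> carrier_mat n n"
    and S: "S \<in> carrier_mat (7*(5*n)+6) (7*(5*n)+6)" "S' \<in> carrier_mat (7*(5*n)+6) (7*(5*n)+6)"
    and inv: "S * S' = 1\<^sub>m (7*(5*n)+6)" "S' * S = 1\<^sub>m (7*(5*n)+6)"
    and E1: "S' * (\<alpha> \<cdot>\<^sub>m M1 (Lmat n lam) + \<beta> \<cdot>\<^sub>m M2 lam (Kmat n X Y)) * S = M1 (Lmat n lam)"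
    and E2: "S' * (\<gamma> \<cdot>\<^sub>m M1 (Lmat n lam) + \<delta> \<cdot>\<^sub>m M2 lam (Kmat n X Y)) * S = M2 lam (Kmat n X' Y')"
  shows "\<alpha> = 1 \<and> \<beta> = 0 \<and> \<gamma> = 0 \<and> \<delta> = 1"
proof -
  let ?N = "7*(5*n)+6" and ?P = "M1 (Lmat n lam)"
  let ?Q = "M2 lam (Kmat n X Y)" and ?Q' = "M2 lam (Kmat n X' Y')"
  have PQ: "?P \<in> carrier_mat ?N ?N" "?Q \<in> carrier_mat ?N ?N" "?Q' \<in> carrier_mat ?N ?N"
    by (simp_all add: M1_scalar_frame[of _ "5*n"] M2_scalar_frame[of _ "5*n"])
  define w where "w a b c = kernel.dim (5*n) (a \<cdot>\<^sub>m Lmat n lam + b \<cdot>\<^sub>m Kmat n X Y + c \<cdot>\<^sub>m 1\<^sub>m (5*n))"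
    for a b c
  define w' where "w' a b c = kernel.dim (5*n) (a \<cdot>\<^sub>m Lmat n lam + b \<cdot>\<^sub>m Kmat n X' Y' + c \<cdot>\<^sub>m 1\<^sub>m (5*n))"
    for a b c
  have "nullity_pattern lam (5*n) w \<alpha> \<beta> c = nullity_pattern lam (5*n) w 1 0 c" for c
  proof -
    have "nullity_pattern lam (5*n) w \<alpha> \<beta> c = kernel.dim ?N (\<alpha> \<cdot>\<^sub>m ?P + \<beta> \<cdot>\<^sub>m ?Q + c \<cdot>\<^sub>m 1\<^sub>m ?N)"
      unfolding w_def by (rule kernel_dim_lincomb_M1_M2[symmetric])
    also have "\<dots> = kernel.dim ?N (S' * (\<alpha> \<cdot>\<^sub>m ?P + \<beta> \<cdot>\<^sub>m ?Q) * S + c \<cdot>\<^sub>m 1\<^sub>m ?N)"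
      by (rule kernel_dim_conj_add_smult_one[symmetric]) (use PQ S inv in auto)
    also have "\<dots> = kernel.dim ?N (1 \<cdot>\<^sub>m ?P + 0 \<cdot>\<^sub>m ?Q + c \<cdot>\<^sub>m 1\<^sub>m ?N)"
      using E1 PQ by simp
    also have "\<dots> = nullity_pattern lam (5*n) w 1 0 c"
      unfolding w_def by (rule kernel_dim_lincomb_M1_M2)
    finally show ?thesis .
  qed
  moreover have "nullity_pattern lam (5*n) w \<gamma> \<delta> c = nullity_pattern lam (5*n) w' 0 1 c" for c
  proof -
    have "nullity_pattern lam (5*n) w \<gamma> \<delta> c = kernel.dim ?N (\<gamma> \<cdot>\<^sub>m ?P + \<delta> \<cdot>\<^sub>m ?Q + c \<cdot>\<^sub>m 1\<^sub>m ?N)"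
      unfolding w_def by (rule kernel_dim_lincomb_M1_M2[symmetric])
    also have "\<dots> = kernel.dim ?N (S' * (\<gamma> \<cdot>\<^sub>m ?P + \<delta> \<cdot>\<^sub>m ?Q) * S + c \<cdot>\<^sub>m 1\<^sub>m ?N)"
      by (rule kernel_dim_conj_add_smult_one[symmetric]) (use PQ S inv in auto)
    also have "\<dots> = kernel.dim ?N (0 \<cdot>\<^sub>m ?P + 1 \<cdot>\<^sub>m ?Q' + c \<cdot>\<^sub>m 1\<^sub>m ?N)"
      using E2 PQ by simp
    also have "\<dots> = nullity_pattern lam (5*n) w' 0 1 c"
      unfolding w'_def by (rule kernel_dim_lincomb_M1_M2)
    finally show ?thesis .
  qed
  moreover have "w a b c \<le> 5*n" "w' a b c \<le> 5*n" for a b c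
    unfolding w_def w'_def by (simp_all add: kernel_dim_le)
  moreover have "a * lam + c \<noteq> 0 \<Longrightarrow> w a b c = 0" for a b c
    unfolding w_def using XY by (intro mat_kernel_trivial_imp_kernel_dim_0 mat_kernel_lincomb_Lmat_Kmat)
  ultimately show ?thesis by (intro nullity_pattern_rigid[OF lam, of w "5*n" w']) auto
qed

lemma similarity_M1_M2_imp_pair_similar:
  fixes lam :: "'a::field"
  assumes lam: "lam \<noteq> 0"
    and XY: "X \<in> carrier_mat n n" "Y \<in> carrier_mat n n" "X' \<in> carrier_mat n n" "Y' \<in> carrier_mat n n"
    and S: "S \<in> carrier_mat (7*(5*n)+6) (7*(5*n)+6)" "S' \<in> carrier_mat (7*(5*n)+6) (7*(5*n)+6)"
    and inv: "S * S' = 1\<^sub>m (7*(5*n)+6)" "S' * S = 1\<^sub>m (7*(5*n)+6)"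
    and E1: "S' * M1 (Lmat n lam) * S = M1 (Lmat n lam)"
    and E2: "S' * M2 lam (Kmat n X Y) * S = M2 lam (Kmat n X' Y')"
  shows "pair_similar n (X, Y) (X', Y')"
proof -
  have "M1 (Lmat n lam) \<in> carrier_mat (7*(5*n)+6) (7*(5*n)+6)"
    "M2 lam (Kmat n X Y) \<in> carrier_mat (7*(5*n)+6) (7*(5*n)+6)"
    by (simp_all add: M1_scalar_frame[of _ "5*n"] M2_scalar_frame[of _ "5*n"])
  from conj_eq_imp_intertwine[OF this(1) S inv(1) E1] conj_eq_imp_intertwine[OF this(2) S inv(1) E2]
  have H: "M1 (Lmat n lam) * S = S * M1 (Lmat n lam)" "M2 lam (Kmat n X Y) * S = S * M2 lam (Kmat n X' Y')"
    "M1 (Lmat n lam) * S' = S' * M1 (Lmat n lam)" "M2 lam (Kmat n X' Y') * S' = S' * M2 lam (Kmat n X Y)"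
    by auto
  let ?A = "corner_block n S 3 3" and ?A' = "corner_block n S' 3 3"
  have "?A * ?A' = corner_block n (S * S') 3 3"
    using intertwiner_corner_row_3_support[OF lam S(1) XY H(1,2)]
    by (intro corner_block_mult_diag[OF S, symmetric]) auto
  then have "?A * ?A' = 1\<^sub>m n" using inv(1) corner_block_one_mat[of 3 n] by simp
  moreover have "?A' * ?A = corner_block n (S' * S) 3 3"
    using intertwiner_corner_row_3_support[OF lam S(2) XY(3,4,1,2) H(3,4)]
    by (intro corner_block_mult_diag[OF S(2,1), symmetric]) auto
  then have "?A' * ?A = 1\<^sub>m n" using inv(2) corner_block_one_mat[of 3 n] by simp
  moreover have "?A' * X * ?A = X'" "?A' * Y * ?A = Y'"
    using intertwiner_corner_block_33[OF S(1) XY H(1,2)] XY calculation(2)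
    by (auto intro: intertwine_imp_conj_eq[of _ n] simp: eq_commute[of "X * ?A"])
  ultimately show ?thesis unfolding pair_similar_def
    by (intro exI[of _ ?A] exI[of _ ?A']) simp
qed

lemma pair_weakly_similar_imp_pair_similar:
  fixes lam :: "'a::field"
  assumes lam: "lam \<noteq> 0"
    and XY: "X \<in> carrier_mat n n" "Y \<in> carrier_mat n n" "X' \<in> carrier_mat n n" "Y' \<in> carrier_mat n n"
    and ws: "pair_weakly_similar (7*(5*n)+6)
      (M1 (Lmat n lam), M2 lam (Kmat n X Y)) (M1 (Lmat n lam), M2 lam (Kmat n X' Y'))"
  shows "pair_similar n (X, Y) (X', Y')"
proof -
  from ws obtain S S' \<alpha> \<beta> \<gamma> \<delta>
    where S: "S \<in> carrier_mat (7*(5*n)+6) (7*(5*n)+6)" "S' \<in> carrier_mat (7*(5*n)+6) (7*(5*n)+6)"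
    and inv: "S * S' = 1\<^sub>m (7*(5*n)+6)" "S' * S = 1\<^sub>m (7*(5*n)+6)"
    and E1: "S' * (\<alpha> \<cdot>\<^sub>m M1 (Lmat n lam) + \<beta> \<cdot>\<^sub>m M2 lam (Kmat n X Y)) * S = M1 (Lmat n lam)"
    and E2: "S' * (\<gamma> \<cdot>\<^sub>m M1 (Lmat n lam) + \<delta> \<cdot>\<^sub>m M2 lam (Kmat n X Y)) * S = M2 lam (Kmat n X' Y')"
    unfolding pair_weakly_similar_def by auto
  moreover have "\<alpha> = 1 \<and> \<beta> = 0 \<and> \<gamma> = 0 \<and> \<delta> = 1"
    using weak_similarity_M1_M2_coefficients[OF lam XY(1,2) S inv E1 E2] .
  ultimately show ?thesis
    by (intro similarity_M1_M2_imp_pair_similar[OF lam XY S inv])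
      (simp_all add: M1_scalar_frame[of _ "5*n"] M2_scalar_frame[of _ "5*n"])
qed

lemma M1_Lmat_M2_Kmat_commute:
  fixes lam :: "'a::comm_ring_1"
  assumes "X \<in> carrier_mat n n" "Y \<in> carrier_mat n n"
  shows "M1 (Lmat n lam) * M2 lam (Kmat n X Y) = M2 lam (Kmat n X Y) * M1 (Lmat n lam)"
  using assms
  by (simp add: M1_scalar_frame[of _ "5*n"] M2_scalar_frame[of _ "5*n"] mult_scalar_frame Lmat_Kmat_commute)

lemma invertible_M1_Lmat_add_M2_Kmat:
  fixes lam :: "'a::field"
  assumes lam: "lam \<noteq> 0" "lam \<noteq> -1" and XY: "X \<in> carrier_mat n n" "Y \<in> carrier_mat n n"
  shows "invertible_mat (M1 (Lmat n lam) + M2 lam (Kmat n X Y))"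
proof -
  have LK: "Lmat n lam + Kmat n X Y \<in> carrier_mat (5*n) (5*n)" by simp
  have "mat_kernel (1 \<cdot>\<^sub>m Lmat n lam + 1 \<cdot>\<^sub>m Kmat n X Y + 0 \<cdot>\<^sub>m 1\<^sub>m (5*n)) = {0\<^sub>v (5*n)}"
    using lam XY by (intro mat_kernel_lincomb_Lmat_Kmat) simp_all
  then have "mat_kernel (Lmat n lam + Kmat n X Y) = {0\<^sub>v (5*n)}" by simp
  then have "det (Lmat n lam + Kmat n X Y) \<noteq> 0"
    unfolding det_0_iff_vec_prod_zero_field[OF LK] mat_kernel_def by auto
  moreover have "M1 (Lmat n lam) + M2 lam (Kmat n X Y) = scalar_frame (5*n) 1 1 (1 + lam) (Lmat n lam + Kmat n X Y)"
    by (simp add: M1_scalar_frame[of _ "5*n"] M2_scalar_frame[of _ "5*n"] add_scalar_frame)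
  moreover have "1 + lam \<noteq> 0" using lam(2) by (metis add_eq_0_iff add.commute)
  ultimately show ?thesis
    by (intro invertible_mat_if_det_nonzero[of _ "7*(5*n)+6"]) (simp_all add: det_scalar_frame[OF LK])
qed

theorem mainTheorem5:
  fixes lam :: "'a::field" and n :: nat and X Y X' Y' :: "'a mat"
  assumes "lam \<noteq> 0"
    and "X \<in> carrier_mat n n" "Y \<in> carrier_mat n n"
    and "X' \<in> carrier_mat n n" "Y' \<in> carrier_mat n n"
  shows "(pair_similar n (X, Y) (X', Y') \<longleftrightarrow>
           pair_weakly_similar (7*(5*n) + 6)
             (M1 (lam \<cdot>\<^sub>m 1\<^sub>m (5*n) + Jmat n), M2 lam (Kmat n X Y))
             (M1 (lam \<cdot>\<^sub>m 1\<^sub>m (5*n) + Jmat n), M2 lam (Kmat n X' Y')))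
       \<and> M1 (lam \<cdot>\<^sub>m 1\<^sub>m (5*n) + Jmat n) * M2 lam (Kmat n X Y)
           = M2 lam (Kmat n X Y) * M1 (lam \<cdot>\<^sub>m 1\<^sub>m (5*n) + Jmat n)
       \<and> (lam \<noteq> -1 \<longrightarrow> invertible_mat (M1 (lam \<cdot>\<^sub>m 1\<^sub>m (5*n) + Jmat n) + M2 lam (Kmat n X Y)))"
  using pair_similar_imp_pair_weakly_similar[OF assms(2,3)] pair_weakly_similar_imp_pair_similar[OF assms]
    M1_Lmat_M2_Kmat_commute[OF assms(2,3)] invertible_M1_Lmat_add_M2_Kmat[OF assms(1) _ assms(2,3)]
  by blast

end
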